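(* Let $g(u;a)=u(1-u)(u-a)$, $k>0$ and $a\in(0,1)$. Then: (i) If $d>0$ satisfies $d<\min\{\frac{a^2}{4k},\frac{(1-a)^2}{4}\}$ (which equals $\frac{a^2}{4k}$ if $a\le\frac{1}{1/\sqrt k+1}$ and $\frac{(1-a)^2}{4}$ if $a\ge\frac{1}{1/\sqrt k+1}$), then $c(a,d,k)=0$. (ii) Let $d_0(a,k):=\frac{1}{k+1}\min\{k\,d^+(a,k),\,d^-(a)\}$, where $d^-(a)=\max_{y\in(a,1)}\frac{g(y;a)}{y}$ and $d^+(a,k)=\max_{y\in(1-a,1)}\frac{-g(1-y;a)}{ky}$. Then for every $0<d<d_0(a,k)$ and every sequence $(s_i)_{i\in\mathbb Z}\subset\{0,1\}$ there is a function $\Phi:\mathbb R\to\mathbb R$ with $0=d(k\Phi(\xi+1)-(k+1)\Phi(\xi)+\Phi(\xi-1))+g(\Phi(\xi);a)$ for all $\xi\in\mathbb R$ and with $\Phi(i)\in[0,a)$ if $s_i=0$, $\Phi(i)\in(a,1]$ if $s_i=1$. In particular, for $0<d<d_0(a,k)$ there exist infinitely many bounded such solutions (solutions of the traveling wave equation with $c=0$). (iii) If $k>1$ and $d>\frac{a^2}{4(\sqrt k-1)^2}$, then $c(a,d,k)<0$.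
   Context: For $k>0$, $a\in(0,1)$, $d>0$ consider the traveling wave problem: find $c\in\mathbb R$ and $\Phi:\mathbb R\to\mathbb R$ with $$-c\Phi'(\xi)=d\big(k\Phi(\xi+1)-(k+1)\Phi(\xi)+\Phi(\xi-1)\big)+g(\Phi(\xi);a)\quad(\xi\in\mathbb R),\qquad \lim_{\xi\to-\infty}\Phi(\xi)=0,\ \lim_{\xi\to+\infty}\Phi(\xi)=1.$$ It is known (Mallet-Paret) that for bistable $g$ such as the cubic this problem has a solution with $\Phi$ non-decreasing and that $c$ is uniquely determined; it is denoted $c(a,d,k)$. *)

theory Defs
  imports "HOL-Analysis.Analysis"
begin

definition gcub :: "real \<Rightarrow> real \<Rightarrow> real" where
  "gcub u a = u * (1 - u) * (u - a)"

definition lat_rhs :: "real \<Rightarrow> real \<Rightarrow> real \<Rightarrow> (real \<Rightarrow> real) \<Rightarrow> real \<Rightarrow> real" where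
  "lat_rhs a d k \<Phi> \<xi> =
     d * (k * \<Phi> (\<xi> + 1) - (k + 1) * \<Phi> \<xi> + \<Phi> (\<xi> - 1)) + gcub (\<Phi> \<xi>) a"

text \<open>Monotone traveling wave (c, Phi) connecting 0 to 1. For c \<noteq> 0 the
  equation -c Phi' = RHS is required pointwise (Phi differentiable); for c = 0
  the equation reads 0 = RHS pointwise and Phi need not be differentiable
  (as in Mallet-Paret's theory, where Phi may be discontinuous when c = 0).\<close>
definition tw_solution :: "real \<Rightarrow> real \<Rightarrow> real \<Rightarrow> real \<Rightarrow> (real \<Rightarrow> real) \<Rightarrow> bool" where
  "tw_solution a d k c \<Phi> \<longleftrightarrow>
     mono \<Phi> \<and>
     (\<forall>\<xi>. if c = 0 then lat_rhs a d k \<Phi> \<xi> = 0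
           else (\<exists>D. (\<Phi> has_real_derivative D) (at \<xi>) \<and> - c * D = lat_rhs a d k \<Phi> \<xi>)) \<and>
     (\<Phi> \<longlongrightarrow> 0) at_bot \<and> (\<Phi> \<longlongrightarrow> 1) at_top"

definition d_minus :: "real \<Rightarrow> real" where
  "d_minus a = (SUP y\<in>{a<..<1}. gcub y a / y)"

definition d_plus :: "real \<Rightarrow> real \<Rightarrow> real" where
  "d_plus a k = (SUP y\<in>{1-a<..<1}. - gcub (1 - y) a / (k * y))"

definition d_zero :: "real \<Rightarrow> real \<Rightarrow> real" where
  "d_zero a k = (1 / (k + 1)) * min (k * d_plus a k) (d_minus a)"

end

(*
  (i) For c \<noteq> 0 the wave is differentiable and increasing, so c times the right-hand side
  is nonpositive everywhere.  At a point where the wave takes the value (1 + a)/2 (if c > 0)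
  or a/2 (if c < 0), monotonicity bounds the neighbour terms, and for small d the cubic then
  forces the right-hand side to have the wrong sign.

  (ii) For d < d_0 there are b0 < a < b1 such that the lattice functions equal to 0 or b1,
  resp. b0 or 1, according to the pattern are a sub- and a supersolution.  The lattice
  operator is Lipschitz in the centre value and increasing in the neighbours, so the pointwise
  supremum of all subsolutions between them is a solution (Perron's method).  Taking it
  constant on each interval [i, i + 1) gives a solution on the real line; patterns with a
  single site above a give infinitely many distinct ones.

  (iii) If c \<ge> 0 the right-hand side is nonpositive.  For y n = 1 - \<Phi> (\<xi>0 + n), the bound
  g(u) \<ge> -(a^2/4)(1 - u) gives \<beta> y n \<le> k y (n+1) + y (n-1) with \<beta> = k + 1 - a^2/(4d) > 2 sqrt k,
  and g \<ge> 0 near +\<infinity> gives it with k + 1 in place of \<beta>.  The latter forces y to decay like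
  k^-n; the former, factored through the roots of k r^2 - \<beta> r + 1, then forces
  y (n+1) \<le> \<mu> y n for all n with \<mu> < 1, so the bounded sequence y vanishes, contradicting
  \<Phi> \<longrightarrow> 0 at -\<infinity>.
*)
theory Submission
  imports Defs
begin

section \<open>Recurrence inequalities on the integers\<close>

lemma iterate_geometric_lower_bound:
  fixes X :: "nat \<Rightarrow> real"
  assumes "r \<ge> 0" and step: "\<And>j. r * X j \<le> X (Suc j)"
  shows "r ^ j * X 0 \<le> X j"
proof (induction j)
  case (Suc j)
  have "r ^ Suc j * X 0 = r * (r ^ j * X 0)" by simp
  also have "\<dots> \<le> r * X j" using Suc \<open>r \<ge> 0\<close> by (rule mult_left_mono)
  also have "\<dots> \<le> X (Suc j)" by (rule step)
  finally show ?case .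
qed simp

lemma filterlim_int_shift_sequentially: "filterlim (\<lambda>j. n + int j) at_top sequentially"
  unfolding filterlim_at_top eventually_sequentially
proof
  fix Z show "\<exists>N. \<forall>j\<ge>N. Z \<le> n + int j" by (intro exI[of _ "nat (Z - n)"]) auto
qed

lemma tail_ratio_le:
  fixes y :: "int \<Rightarrow> real"
  assumes "k > 0" and lim: "(y \<longlongrightarrow> 0) at_top"
    and convex: "\<And>m. m \<ge> N \<Longrightarrow> (k + 1) * y m \<le> k * y (m + 1) + y (m - 1)"
    and "n \<ge> N"
  shows "y (n + 1) \<le> y n / k"
proof -
  define z where "z j = y (n + 1 + int j) - y (n + int j) / k" for j
  have "incseq z"
  proof (rule incseq_SucI)
    fix j
    define m where "m = n + 1 + int j"
    have "N \<le> m" using \<open>n \<ge> N\<close> unfolding m_def by simp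
    then have "(k + 1) * y m \<le> k * y (m + 1) + y (m - 1)" by (rule convex)
    then have "0 \<le> (k * y (m + 1) + y (m - 1) - (k + 1) * y m) / k" using \<open>k > 0\<close> by simp
    also have "\<dots> = z (Suc j) - z j"
      unfolding z_def m_def using \<open>k > 0\<close> by (simp add: field_simps)
    finally show "z j \<le> z (Suc j)" by simp
  qed
  moreover have "z \<longlonglongrightarrow> 0 - 0 / k"
    unfolding z_def using \<open>k > 0\<close>
    by (intro tendsto_intros filterlim_compose[OF lim] filterlim_int_shift_sequentially) auto
  ultimately have "z 0 \<le> 0" using incseq_le by fastforce
  then show ?thesis unfolding z_def by simp
qed

lemma tail_geometric_decay:
  fixes y :: "int \<Rightarrow> real"
  assumes "k > 0" and "(y \<longlongrightarrow> 0) at_top"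
    and "\<And>m. m \<ge> N \<Longrightarrow> (k + 1) * y m \<le> k * y (m + 1) + y (m - 1)"
  shows "y (N + int j) \<le> (1 / k) ^ j * y N"
proof -
  have "(1 / k) * - y (N + int i) \<le> - y (N + int (Suc i))" for i
    using tail_ratio_le[OF assms, where n = "N + int i"] by (simp add: ac_simps)
  then have "(1 / k) ^ j * - y (N + int 0) \<le> - y (N + int j)"
    using iterate_geometric_lower_bound[of "1 / k" "\<lambda>i. - y (N + int i)"] \<open>k > 0\<close> by simp
  then show ?thesis by simp
qed

lemma larger_root_exists:
  fixes k \<beta> :: real
  assumes "1 \<le> k" and "2 * sqrt k < \<beta>"
  shows "\<exists>r. k * r\<^sup>2 - \<beta> * r + 1 = 0 \<and> 1 < k * r"
proof -
  have "sqrt k \<ge> 1" using assms(1) by simp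
  then have "(2 * sqrt k)\<^sup>2 \<le> \<beta>\<^sup>2" using assms(2) by (intro power_mono) auto
  then have disc: "0 \<le> \<beta>\<^sup>2 - 4 * k" using assms(1) by (simp add: power_mult_distrib)
  define s where "s = sqrt (\<beta>\<^sup>2 - 4 * k)"
  have s: "s\<^sup>2 = \<beta>\<^sup>2 - 4 * k" "0 \<le> s" using disc unfolding s_def by simp_all
  define r where "r = (\<beta> + s) / (2 * k)"
  have "k * r\<^sup>2 - \<beta> * r + 1 = (s\<^sup>2 - (\<beta>\<^sup>2 - 4 * k)) / (4 * k)"
    unfolding r_def using assms(1) by (simp add: field_simps power2_eq_square)
  then have root: "k * r\<^sup>2 - \<beta> * r + 1 = 0" using s(1) by simp
  have "k * r = (\<beta> + s) / 2" unfolding r_def using assms(1) by simp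
  moreover have "2 < \<beta> + s" using assms(2) \<open>sqrt k \<ge> 1\<close> s(2) by linarith
  ultimately have "1 < k * r" by simp
  with root show ?thesis by blast
qed

lemma nonpos_if_growth_beats_decay:
  fixes T :: "int \<Rightarrow> real"
  assumes "0 < q" "q < r"
    and grow: "\<And>n. r * T n \<le> T (n + 1)"
    and decay: "\<And>j. T (N + int j) \<le> C * q ^ j"
  shows "T m \<le> 0"
proof (rule ccontr)
  assume "\<not> T m \<le> 0"
  define p where "p = nat (N - m)"
  define e where "e = nat (m - N)"
  define A where "A = r ^ p * T m"
  have "A > 0" using \<open>\<not> T m \<le> 0\<close> assms(1,2) unfolding A_def by simp
  have grow_from_m: "r * T (m + int j) \<le> T (m + int (Suc j))" for j
    using grow[of "m + int j"] by (simp add: ac_simps)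
  have growth: "r ^ j * T m \<le> T (m + int j)" for j
    using iterate_geometric_lower_bound[of r "\<lambda>j. T (m + int j)", OF _ grow_from_m] assms(1,2)
    by simp
  have bound: "(r / q) ^ i * A \<le> C * q ^ e" for i
  proof -
    have "r ^ (p + i) * T m \<le> T (m + int (p + i))" by (rule growth)
    also have "m + int (p + i) = N + int (e + i)" unfolding p_def e_def by simp
    also have "T (N + int (e + i)) \<le> C * q ^ (e + i)" by (rule decay)
    finally have "r ^ i * A \<le> q ^ i * (C * q ^ e)"
      unfolding A_def by (simp add: power_add mult_ac)
    then show ?thesis using assms(1) by (simp add: field_simps)
  qed
  have "1 < r / q" using assms(1,2) by simp
  then obtain i where "C * q ^ e / A < (r / q) ^ i" using real_arch_pow by blast
  then have "C * q ^ e < (r / q) ^ i * A" using \<open>A > 0\<close> by (simp add: pos_divide_less_eq)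
  with bound[of i] show False by linarith
qed

lemma contracting_bounded_vanishes:
  fixes y :: "int \<Rightarrow> real"
  assumes "0 < \<mu>" "\<mu> < 1" and nonneg: "\<And>n. 0 \<le> y n" and bounded: "\<And>n. y n \<le> C"
    and contract: "\<And>m. y (m + 1) \<le> \<mu> * y m"
  shows "y n = 0"
proof -
  have "(1 / \<mu>) * y (n - int i) \<le> y (n - int (Suc i))" for i
    using contract[of "n - int (Suc i)"] \<open>0 < \<mu>\<close> by (simp add: field_simps)
  then have "(1 / \<mu>) ^ j * y (n - int 0) \<le> y (n - int j)" for j
    using iterate_geometric_lower_bound[of "1 / \<mu>" "\<lambda>i. y (n - int i)"] \<open>0 < \<mu>\<close> by simp
  then have "y n \<le> \<mu> ^ j * y (n - int j)" for j
    using \<open>0 < \<mu>\<close> by (simp add: field_simps)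
  then have "y n \<le> \<mu> ^ j * C" for j
    using bounded[of "n - int j"] \<open>0 < \<mu>\<close> by (meson order_trans mult_left_mono zero_le_power less_imp_le)
  moreover have "(\<lambda>j. \<mu> ^ j * C) \<longlonglongrightarrow> 0 * C"
    using \<open>0 < \<mu>\<close> \<open>\<mu> < 1\<close> by (intro tendsto_mult_right LIMSEQ_power_zero) simp
  ultimately have "y n \<le> 0" using LIMSEQ_le_const by fastforce
  with nonneg show ?thesis by (simp add: order_antisym)
qed

lemma supercritical_lattice_inequality_vanishes:
  fixes y :: "int \<Rightarrow> real" and k \<beta> C :: real
  assumes "1 \<le> k" and "2 * sqrt k < \<beta>"
    and nonneg: "\<And>n. 0 \<le> y n" and bounded: "\<And>n. y n \<le> C"
    and lim: "(y \<longlongrightarrow> 0) at_top"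
    and ineq: "\<And>n. \<beta> * y n \<le> k * y (n + 1) + y (n - 1)"
    and tail: "\<And>n. n \<ge> N \<Longrightarrow> (k + 1) * y n \<le> k * y (n + 1) + y (n - 1)"
  shows "y n = 0"
proof -
  obtain r where root: "k * r\<^sup>2 - \<beta> * r + 1 = 0" and "1 < k * r"
    using larger_root_exists[OF assms(1,2)] by blast
  define \<mu> where "\<mu> = 1 / (k * r)"
  have "0 < r" using zero_less_mult_pos[of k r] \<open>1 < k * r\<close> assms(1) by linarith
  have "0 < \<mu>" "\<mu> < 1" using \<open>1 < k * r\<close> unfolding \<mu>_def by simp_all
  have decay: "y (N + int j) \<le> (1 / k) ^ j * C" for j
  proof -
    have "y (N + int j) \<le> (1 / k) ^ j * y N"
      by (rule tail_geometric_decay) (use assms(1) lim tail in auto)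
    also have "\<dots> \<le> (1 / k) ^ j * C" using bounded[of N] assms(1) by (simp add: mult_left_mono)
    finally show ?thesis .
  qed
  have sum: "k * (r + \<mu>) = \<beta>" and prod: "k * r * \<mu> = 1"
    using root \<open>1 < k * r\<close> \<open>0 < r\<close> unfolding \<mu>_def by (auto simp: field_simps power2_eq_square)
  define T where "T m = y (m + 1) - \<mu> * y m" for m
  have T_nonpos: "T m \<le> 0" for m
  proof (rule nonpos_if_growth_beats_decay)
    show "0 < 1 / k" "1 / k < r" using assms(1) \<open>1 < k * r\<close> by (auto simp: divide_less_eq mult.commute)
    show "r * T n \<le> T (n + 1)" for n
    proof -
      have "k * (T (n + 1) - r * T n) = k * y (n + 2) - \<beta> * y (n + 1) + y n"
        unfolding T_def sum[symmetric] using prod by (simp add: algebra_simps)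
      also have "\<dots> \<ge> 0" using ineq[of "n + 1"] by (simp add: add.assoc)
      finally show ?thesis using assms(1) by (simp add: zero_le_mult_iff)
    qed
    show "T (N + int j) \<le> C / k * (1 / k) ^ j" for j
    proof -
      have "T (N + int j) \<le> y (N + int (Suc j))" unfolding T_def
        using nonneg[of "N + int j"] \<open>0 < \<mu>\<close> by (simp add: ac_simps)
      also have "\<dots> \<le> C / k * (1 / k) ^ j" using decay[of "Suc j"] by (simp add: mult.commute)
      finally show ?thesis .
    qed
  qed
  show ?thesis
  proof (rule contracting_bounded_vanishes[OF \<open>0 < \<mu>\<close> \<open>\<mu> < 1\<close> nonneg bounded])
    show "y (m + 1) \<le> \<mu> * y m" for m using T_nonpos[of m] unfolding T_def by simp
  qed
qed

section \<open>The sign of the wave speed\<close>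

lemma mono_between_limits:
  fixes f :: "real \<Rightarrow> real"
  assumes "mono f" and "(f \<longlongrightarrow> l) at_bot" and "(f \<longlongrightarrow> u) at_top"
  shows "l \<le> f x" and "f x \<le> u"
proof -
  have "eventually (\<lambda>t. f t \<le> f x) at_bot"
    unfolding eventually_at_bot_linorder using \<open>mono f\<close> by (auto dest: monoD)
  then show "l \<le> f x" using tendsto_upperbound[OF assms(2)] by simp
  have "eventually (\<lambda>t. f x \<le> f t) at_top"
    unfolding eventually_at_top_linorder using \<open>mono f\<close> by (auto dest: monoD)
  then show "f x \<le> u" using tendsto_lowerbound[OF assms(3)] by simp
qed

lemma continuous_attains_between_limits:
  fixes f :: "real \<Rightarrow> real"
  assumes "\<And>x. isCont f x" and "(f \<longlongrightarrow> l) at_bot" and "(f \<longlongrightarrow> u) at_top" and "l < v" "v < u"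
  shows "\<exists>x. f x = v"
proof -
  obtain x1 where x1: "\<And>t. t \<le> x1 \<Longrightarrow> f t < v"
    using order_tendstoD(2)[OF assms(2) \<open>l < v\<close>] unfolding eventually_at_bot_linorder by blast
  obtain x2 where x2: "\<And>t. t \<ge> x2 \<Longrightarrow> v < f t"
    using order_tendstoD(1)[OF assms(3) \<open>v < u\<close>] unfolding eventually_at_top_linorder by blast
  have "f (min x1 x2) \<le> v" "v \<le> f (max x1 x2)" "min x1 x2 \<le> max x1 x2"
    using x1 x2 by (simp_all add: less_imp_le)
  then show ?thesis using IVT[of f "min x1 x2" v "max x1 x2"] assms(1) by blast
qed

lemma tw_solution_range:
  assumes "tw_solution a d k c \<Phi>"
  shows "0 \<le> \<Phi> x" and "\<Phi> x \<le> 1"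
  using assms mono_between_limits unfolding tw_solution_def by blast+

lemma tw_solution_rhs_sign:
  assumes "tw_solution a d k c \<Phi>"
  shows "0 \<le> c \<Longrightarrow> lat_rhs a d k \<Phi> \<xi> \<le> 0" and "c \<le> 0 \<Longrightarrow> 0 \<le> lat_rhs a d k \<Phi> \<xi>"
proof -
  have "\<exists>D \<ge> 0. lat_rhs a d k \<Phi> \<xi> = - c * D"
  proof (cases "c = 0")
    case False
    then obtain D where D: "(\<Phi> has_real_derivative D) (at \<xi>)" "- c * D = lat_rhs a d k \<Phi> \<xi>"
      using assms unfolding tw_solution_def by metis
    have "0 \<le> D"
      using mono_on_imp_deriv_nonneg[of UNIV \<Phi>, OF _ D(1)] assms unfolding tw_solution_def by simp
    with D(2) show ?thesis by auto
  qed (use assms in \<open>auto simp: tw_solution_def\<close>)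
  then show "0 \<le> c \<Longrightarrow> lat_rhs a d k \<Phi> \<xi> \<le> 0" and "c \<le> 0 \<Longrightarrow> 0 \<le> lat_rhs a d k \<Phi> \<xi>"
    by (auto simp: mult_nonpos_nonneg)
qed

lemma tw_solution_attains:
  assumes "tw_solution a d k c \<Phi>" and "c \<noteq> 0" and "0 < v" "v < 1"
  shows "\<exists>\<xi>. \<Phi> \<xi> = v"
proof (rule continuous_attains_between_limits)
  show "isCont \<Phi> x" for x
    using assms(1,2) DERIV_isCont unfolding tw_solution_def by metis
qed (use assms in \<open>auto simp: tw_solution_def\<close>)

lemma lat_rhs_lower_bound_mono:
  assumes "mono \<Phi>" and "\<And>x. 0 \<le> \<Phi> x" and "0 \<le> d" "0 \<le> k"
  shows "gcub (\<Phi> \<xi>) a - d * \<Phi> \<xi> \<le> lat_rhs a d k \<Phi> \<xi>"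
proof -
  have "k * \<Phi> \<xi> \<le> k * \<Phi> (\<xi> + 1)" using \<open>mono \<Phi>\<close> \<open>0 \<le> k\<close> by (simp add: monoD mult_left_mono)
  then have "- \<Phi> \<xi> \<le> k * \<Phi> (\<xi> + 1) - (k + 1) * \<Phi> \<xi> + \<Phi> (\<xi> - 1)"
    using assms(2)[of "\<xi> - 1"] by (simp add: algebra_simps)
  then have "d * - \<Phi> \<xi> \<le> d * (k * \<Phi> (\<xi> + 1) - (k + 1) * \<Phi> \<xi> + \<Phi> (\<xi> - 1))"
    using \<open>0 \<le> d\<close> by (rule mult_left_mono)
  then show ?thesis unfolding lat_rhs_def by simp
qed

lemma lat_rhs_upper_bound_mono:
  assumes "mono \<Phi>" and "\<And>x. \<Phi> x \<le> 1" and "0 \<le> d" "0 \<le> k"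
  shows "lat_rhs a d k \<Phi> \<xi> \<le> gcub (\<Phi> \<xi>) a + d * k * (1 - \<Phi> \<xi>)"
proof -
  have "k * \<Phi> (\<xi> + 1) \<le> k" using assms(2) \<open>0 \<le> k\<close> by (simp add: mult_left_le)
  moreover have "\<Phi> (\<xi> - 1) \<le> \<Phi> \<xi>" using \<open>mono \<Phi>\<close> by (simp add: monoD)
  ultimately have "k * \<Phi> (\<xi> + 1) - (k + 1) * \<Phi> \<xi> + \<Phi> (\<xi> - 1) \<le> k * (1 - \<Phi> \<xi>)"
    by (simp add: algebra_simps)
  then have "d * (k * \<Phi> (\<xi> + 1) - (k + 1) * \<Phi> \<xi> + \<Phi> (\<xi> - 1)) \<le> d * (k * (1 - \<Phi> \<xi>))"
    using \<open>0 \<le> d\<close> by (rule mult_left_mono)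
  then show ?thesis unfolding lat_rhs_def by (simp add: mult.assoc)
qed

lemma tw_speed_zero_if_small_d:
  assumes "0 < k" "0 < a" "a < 1" "0 < d"
    and "d < min (a\<^sup>2 / (4 * k)) ((1 - a)\<^sup>2 / 4)"
    and tw: "tw_solution a d k c \<Phi>"
  shows "c = 0"
proof (rule ccontr)
  assume "c \<noteq> 0"
  have mono: "mono \<Phi>" using tw unfolding tw_solution_def by blast
  note range = tw_solution_range[OF tw]
  show False
  proof (cases "0 < c")
    case True
    define u where "u = (1 + a) / 2"
    have "0 < u" "u < 1" using assms(2,3) unfolding u_def by simp_all
    then obtain \<xi> where \<xi>: "\<Phi> \<xi> = u" using tw_solution_attains[OF tw \<open>c \<noteq> 0\<close>] by blast
    have "gcub u a = u * ((1 - a)\<^sup>2 / 4)"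
      unfolding gcub_def u_def by (simp add: field_simps power2_eq_square)
    moreover have "d * u < u * ((1 - a)\<^sup>2 / 4)"
      using assms(2,3,5) unfolding u_def by (simp add: mult.commute)
    moreover have "gcub u a - d * u \<le> lat_rhs a d k \<Phi> \<xi>"
      using lat_rhs_lower_bound_mono[OF mono range(1), of d k \<xi> a] assms(1,4) unfolding \<xi> by simp
    ultimately have "0 < lat_rhs a d k \<Phi> \<xi>" by linarith
    then show False using tw_solution_rhs_sign(1)[OF tw, of \<xi>] True by linarith
  next
    case False
    define u where "u = a / 2"
    have "0 < u" "u < 1" using assms(2,3) unfolding u_def by simp_all
    then obtain \<xi> where \<xi>: "\<Phi> \<xi> = u" using tw_solution_attains[OF tw \<open>c \<noteq> 0\<close>] by blast
    have "gcub u a = - ((1 - u) * (a\<^sup>2 / 4))"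
      unfolding gcub_def u_def by (simp add: field_simps power2_eq_square)
    moreover have "d * k < a\<^sup>2 / 4" using assms(1,5) by (simp add: pos_less_divide_eq mult.commute)
    then have "d * k * (1 - u) < (1 - u) * (a\<^sup>2 / 4)"
      using \<open>u < 1\<close> by (simp add: mult.commute)
    moreover have "lat_rhs a d k \<Phi> \<xi> \<le> gcub u a + d * k * (1 - u)"
      using lat_rhs_upper_bound_mono[OF mono range(2), of d k a \<xi>] assms(1,4) unfolding \<xi> by simp
    ultimately have "lat_rhs a d k \<Phi> \<xi> < 0" by linarith
    then show False using tw_solution_rhs_sign(2)[OF tw, of \<xi>] False by linarith
  qed
qed

lemma gcub_lower_bound:
  fixes u a :: real
  assumes "u \<le> 1"
  shows "- (a\<^sup>2 / 4) * (1 - u) \<le> gcub u a"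
proof -
  have "gcub u a + (a\<^sup>2 / 4) * (1 - u) = (1 - u) * (u - a / 2)\<^sup>2"
    unfolding gcub_def by (simp add: algebra_simps power2_eq_square)
  moreover have "0 \<le> (1 - u) * (u - a / 2)\<^sup>2" using assms by simp
  ultimately show ?thesis by linarith
qed

lemma gcub_nonneg:
  fixes u a :: real
  assumes "0 \<le> a" "a \<le> u" "u \<le> 1"
  shows "0 \<le> gcub u a"
  using assms unfolding gcub_def by simp

lemma lat_rhs_nonpos_gap_inequality:
  assumes "lat_rhs a d k \<Phi> \<xi> \<le> 0" and "0 < d" and "- B * (1 - \<Phi> \<xi>) \<le> gcub (\<Phi> \<xi>) a"
  shows "(k + 1 - B / d) * (1 - \<Phi> \<xi>) \<le> k * (1 - \<Phi> (\<xi> + 1)) + (1 - \<Phi> (\<xi> - 1))"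
proof -
  have "d * ((k + 1 - B / d) * (1 - \<Phi> \<xi>) - (k * (1 - \<Phi> (\<xi> + 1)) + (1 - \<Phi> (\<xi> - 1))))
      = lat_rhs a d k \<Phi> \<xi> - gcub (\<Phi> \<xi>) a - B * (1 - \<Phi> \<xi>)"
    unfolding lat_rhs_def using \<open>0 < d\<close> by (simp add: field_simps)
  also have "\<dots> \<le> 0" using assms(1,3) by simp
  finally show ?thesis using \<open>0 < d\<close> by (simp add: mult_le_0_iff)
qed

lemma supercritical_coefficient:
  fixes k a d :: real
  assumes "1 < k" and "0 < a" and "a\<^sup>2 / (4 * (sqrt k - 1)\<^sup>2) < d"
  shows "0 < d" and "2 * sqrt k < k + 1 - a\<^sup>2 / (4 * d)"
proof -
  have "1 < sqrt k" using assms(1) by simp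
  then have pos: "0 < 4 * (sqrt k - 1)\<^sup>2" by simp
  then have "0 < a\<^sup>2 / (4 * (sqrt k - 1)\<^sup>2)" using assms(2) by simp
  then show "0 < d" using assms(3) by linarith
  have "a\<^sup>2 / (4 * d) < (sqrt k - 1)\<^sup>2"
    using assms(3) pos \<open>0 < d\<close> by (simp add: field_simps)
  moreover have "(sqrt k - 1)\<^sup>2 = k - 2 * sqrt k + 1"
    using assms(1) by (simp add: power2_eq_square algebra_simps)
  ultimately show "2 * sqrt k < k + 1 - a\<^sup>2 / (4 * d)" by linarith
qed

lemma tw_speed_neg_if_large_d:
  assumes "1 < k" "0 < a" "a < 1"
    and "a\<^sup>2 / (4 * (sqrt k - 1)\<^sup>2) < d"
    and tw: "tw_solution a d k c \<Phi>"
  shows "c < 0"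
proof (rule ccontr)
  assume "\<not> c < 0"
  then have rhs: "lat_rhs a d k \<Phi> \<xi> \<le> 0" for \<xi> using tw_solution_rhs_sign(1)[OF tw] by simp
  have "0 < d" and \<beta>: "2 * sqrt k < k + 1 - a\<^sup>2 / (4 * d)"
    using supercritical_coefficient[OF assms(1,2,4)] by simp_all
  have lim0: "(\<Phi> \<longlongrightarrow> 0) at_bot" and lim1: "(\<Phi> \<longlongrightarrow> 1) at_top"
    using tw unfolding tw_solution_def by simp_all
  obtain \<xi>\<^sub>0 where "\<Phi> \<xi>\<^sub>0 < 1"
    using order_tendstoD(2)[OF lim0, of 1] unfolding eventually_at_bot_linorder by auto
  obtain X where X: "\<And>t. t \<ge> X \<Longrightarrow> a < \<Phi> t"
    using order_tendstoD(1)[OF lim1 \<open>a < 1\<close>] unfolding eventually_at_top_linorder by auto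
  define y where "y n = 1 - \<Phi> (\<xi>\<^sub>0 + of_int n)" for n
  have shift: "\<xi>\<^sub>0 + of_int (n + 1) = \<xi>\<^sub>0 + of_int n + 1" "\<xi>\<^sub>0 + of_int (n - 1) = \<xi>\<^sub>0 + of_int n - 1"
    for n by simp_all
  have "y n = 0" for n
  proof (rule supercritical_lattice_inequality_vanishes[OF less_imp_le[OF \<open>1 < k\<close>] \<beta>])
    show "0 \<le> y n" "y n \<le> 1" for n
      unfolding y_def using tw_solution_range[OF tw] by simp_all
    have "((\<lambda>n. 1 - \<Phi> (\<xi>\<^sub>0 + of_int n)) \<longlongrightarrow> 1 - 1) at_top"
      by (intro tendsto_diff tendsto_const filterlim_compose[OF lim1]
          filterlim_tendsto_add_at_top[OF tendsto_const filterlim_real_of_int_at_top])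
    then show "(y \<longlongrightarrow> 0) at_top" unfolding y_def by simp
    show "(k + 1 - a\<^sup>2 / (4 * d)) * y n \<le> k * y (n + 1) + y (n - 1)" for n
      using lat_rhs_nonpos_gap_inequality[OF rhs \<open>0 < d\<close> gcub_lower_bound[OF tw_solution_range(2)[OF tw]]]
      unfolding y_def shift by simp
    show "(k + 1) * y n \<le> k * y (n + 1) + y (n - 1)" if "\<lceil>X - \<xi>\<^sub>0\<rceil> \<le> n" for n
    proof -
      have "X \<le> \<xi>\<^sub>0 + of_int n" using that by linarith
      then have "a < \<Phi> (\<xi>\<^sub>0 + of_int n)" by (rule X)
      then show ?thesis
        using lat_rhs_nonpos_gap_inequality[OF rhs \<open>0 < d\<close>, where B = 0] gcub_nonneg tw_solution_range[OF tw] \<open>0 < a\<close>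
        unfolding y_def shift by simp
    qed
  qed
  from this[of 0] show False using \<open>\<Phi> \<xi>\<^sub>0 < 1\<close> unfolding y_def by simp
qed

section \<open>Stationary solutions by Perron's method\<close>

definition lattice_rhs :: "real \<Rightarrow> real \<Rightarrow> (real \<Rightarrow> real) \<Rightarrow> (int \<Rightarrow> real) \<Rightarrow> int \<Rightarrow> real" where
  "lattice_rhs d k f x i = d * (k * x (i + 1) - (k + 1) * x i + x (i - 1)) + f (x i)"

definition lattice_subsolutions ::
  "real \<Rightarrow> real \<Rightarrow> (real \<Rightarrow> real) \<Rightarrow> (int \<Rightarrow> real) \<Rightarrow> (int \<Rightarrow> real) \<Rightarrow> (int \<Rightarrow> real) set" where
  "lattice_subsolutions d k f lo hi =
     {x. (\<forall>i. lo i \<le> x i \<and> x i \<le> hi i) \<and> (\<forall>i. 0 \<le> lattice_rhs d k f x i)}"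

lemma lattice_rhs_le:
  assumes "0 \<le> d" "0 \<le> k" and lip: "L-lipschitz_on X f" and "x i \<in> X" "z i \<in> X"
    and "x (i + 1) \<le> z (i + 1)" "x (i - 1) \<le> z (i - 1)"
  shows "lattice_rhs d k f x i \<le> lattice_rhs d k f z i + (L + d * (k + 1)) * \<bar>z i - x i\<bar>"
proof -
  have "f (x i) - f (z i) \<le> L * \<bar>z i - x i\<bar>"
    using lipschitz_onD[OF lip \<open>x i \<in> X\<close> \<open>z i \<in> X\<close>] by (simp add: dist_real_def abs_minus_commute)
  moreover have "d * k * x (i + 1) \<le> d * k * z (i + 1)" "d * x (i - 1) \<le> d * z (i - 1)"
    using assms(1,2,6,7) by (simp_all add: mult_left_mono)
  moreover have "d * (k + 1) * (z i - x i) \<le> d * (k + 1) * \<bar>z i - x i\<bar>"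
    using assms(1,2) by (simp add: mult_left_mono)
  ultimately show ?thesis unfolding lattice_rhs_def by (simp add: algebra_simps)
qed

lemma Sup_lattice_subsolutions:
  fixes d k L :: real and f :: "real \<Rightarrow> real" and lo hi :: "int \<Rightarrow> real"
  defines "S \<equiv> lattice_subsolutions d k f lo hi"
  assumes "0 \<le> d" "0 \<le> k" and lip: "L-lipschitz_on X f" and X: "\<And>i. {lo i..hi i} \<subseteq> X"
    and "S \<noteq> {}"
  shows "(\<lambda>i. SUP x\<in>S. x i) \<in> S" and "x \<in> S \<Longrightarrow> x i \<le> (SUP x\<in>S. x i)"
proof -
  define z where "z i = (SUP x\<in>S. x i)" for i
  have bdd: "bdd_above ((\<lambda>x. x i) ` S)" for i
    by (rule bdd_aboveI[of _ "hi i"]) (auto simp: S_def lattice_subsolutions_def)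
  show upper: "x \<in> S \<Longrightarrow> x i \<le> (SUP x\<in>S. x i)" for x i
    by (rule cSUP_upper[OF _ bdd])
  have below_z: "x \<in> S \<Longrightarrow> x i \<le> z i" for x i unfolding z_def by (rule upper)
  have z_hi: "z i \<le> hi i" for i
    unfolding z_def using \<open>S \<noteq> {}\<close> by (rule cSUP_least) (auto simp: S_def lattice_subsolutions_def)
  have lo_z: "lo i \<le> z i" for i
  proof -
    obtain x where "x \<in> S" using \<open>S \<noteq> {}\<close> by blast
    then have "lo i \<le> x i" unfolding S_def lattice_subsolutions_def by blast
    also have "x i \<le> z i" using \<open>x \<in> S\<close> by (rule below_z)
    finally show ?thesis .
  qed
  have inX: "x i \<in> X" if "x \<in> S" for x i
    using that X[of i] unfolding S_def lattice_subsolutions_def by auto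
  have z_in_X: "z i \<in> X" for i using X[of i] lo_z[of i] z_hi[of i] by auto
  define M where "M = L + d * (k + 1) + 1"
  have "0 \<le> d * (k + 1)" using assms(2,3) by simp
  then have "0 < M" using lipschitz_on_nonneg[OF lip] unfolding M_def by linarith
  have "0 \<le> lattice_rhs d k f z i" for i
  proof -
    have "x i \<le> z i + lattice_rhs d k f z i / M" if "x \<in> S" for x
    proof -
      have "0 \<le> lattice_rhs d k f x i" using that unfolding S_def lattice_subsolutions_def by blast
      also have "\<dots> \<le> lattice_rhs d k f z i + (L + d * (k + 1)) * \<bar>z i - x i\<bar>"
        using that by (intro lattice_rhs_le[OF assms(2,3) lip inX z_in_X] below_z)
      also have "\<dots> \<le> lattice_rhs d k f z i + M * (z i - x i)"
        using below_z[OF that, of i] unfolding M_def by (simp add: mult_right_mono)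
      finally show ?thesis using \<open>0 < M\<close> by (simp add: field_simps)
    qed
    then have "(SUP x\<in>S. x i) \<le> z i + lattice_rhs d k f z i / M"
      using \<open>S \<noteq> {}\<close> by (intro cSUP_least)
    then show ?thesis using \<open>0 < M\<close> unfolding z_def[of i, symmetric] by (simp add: zero_le_divide_iff)
  qed
  then have "z \<in> S" using lo_z z_hi unfolding S_def lattice_subsolutions_def by blast
  then show "(\<lambda>i. SUP x\<in>S. x i) \<in> S" unfolding z_def .
qed

lemma lattice_subsolution_raise:
  fixes d k L :: real and f :: "real \<Rightarrow> real" and lo hi :: "int \<Rightarrow> real"
  defines "S \<equiv> lattice_subsolutions d k f lo hi"
  assumes "0 \<le> d" "0 \<le> k" and lip: "L-lipschitz_on X f" and X: "\<And>i. {lo i..hi i} \<subseteq> X"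
    and "z \<in> S" and "z i < hi i" and "0 < lattice_rhs d k f z i"
  shows "\<exists>z'\<in>S. z i < z' i"
proof -
  have z: "lo j \<le> z j" "z j \<le> hi j" "0 \<le> lattice_rhs d k f z j" for j
    using \<open>z \<in> S\<close> unfolding S_def lattice_subsolutions_def by auto
  have z_in_X: "z j \<in> X" for j using X[of j] z[of j] by auto
  define M where "M = L + d * (k + 1) + 1"
  have "0 \<le> d * (k + 1)" using assms(2,3) by simp
  then have "0 < M" using lipschitz_on_nonneg[OF lip] unfolding M_def by linarith
  define \<epsilon> where "\<epsilon> = min (hi i - z i) (lattice_rhs d k f z i / M)"
  have "0 < \<epsilon>" "z i + \<epsilon> \<le> hi i" "M * \<epsilon> \<le> lattice_rhs d k f z i"
    using assms(7,8) \<open>0 < M\<close> unfolding \<epsilon>_def by (auto simp: min_def field_simps)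
  define z' where "z' = z(i := z i + \<epsilon>)"
  have "z' \<in> S"
    unfolding S_def lattice_subsolutions_def
  proof (intro CollectI conjI allI)
    fix j
    show "lo j \<le> z' j" "z' j \<le> hi j"
      using z[of j] \<open>0 < \<epsilon>\<close> \<open>z i + \<epsilon> \<le> hi i\<close> unfolding z'_def by auto
    then have "z' j \<in> X" using X[of j] by auto
    then have "lattice_rhs d k f z j \<le> lattice_rhs d k f z' j + (L + d * (k + 1)) * \<bar>z' j - z j\<bar>"
      using z_in_X \<open>0 < \<epsilon>\<close> by (intro lattice_rhs_le[OF assms(2,3) lip]) (auto simp: z'_def)
    also have "\<dots> \<le> lattice_rhs d k f z' j + M * \<bar>z' j - z j\<bar>"
      unfolding M_def by (simp add: mult_right_mono)
    finally show "0 \<le> lattice_rhs d k f z' j"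
      using z(3)[of j] \<open>0 < \<epsilon>\<close> \<open>M * \<epsilon> \<le> lattice_rhs d k f z i\<close>
      unfolding z'_def by (cases "j = i") auto
  qed
  moreover have "z i < z' i" using \<open>0 < \<epsilon>\<close> unfolding z'_def by simp
  ultimately show ?thesis by blast
qed

lemma maximal_lattice_subsolution_solves:
  fixes d k L :: real and f :: "real \<Rightarrow> real" and lo hi :: "int \<Rightarrow> real"
  defines "S \<equiv> lattice_subsolutions d k f lo hi"
  assumes "0 \<le> d" "0 \<le> k" and lip: "L-lipschitz_on X f" and X: "\<And>i. {lo i..hi i} \<subseteq> X"
    and "z \<in> S" and maximal: "\<And>x i. x \<in> S \<Longrightarrow> x i \<le> z i"
    and super: "\<And>i. lattice_rhs d k f hi i \<le> 0"
  shows "lattice_rhs d k f z i = 0"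
proof (rule ccontr)
  assume "lattice_rhs d k f z i \<noteq> 0"
  have z: "lo j \<le> z j" "z j \<le> hi j" "0 \<le> lattice_rhs d k f z j" for j
    using \<open>z \<in> S\<close> unfolding S_def lattice_subsolutions_def by auto
  have pos: "0 < lattice_rhs d k f z i" using z(3)[of i] \<open>lattice_rhs d k f z i \<noteq> 0\<close> by simp
  have "z j \<in> X" "hi j \<in> X" for j using X[of j] z[of j] by auto
  consider "z i = hi i" | "z i < hi i" using z(2)[of i] by linarith
  then show False
  proof cases
    case 1
    then have "lattice_rhs d k f z i \<le> lattice_rhs d k f hi i + (L + d * (k + 1)) * \<bar>hi i - z i\<bar>"
      using \<open>\<And>j. z j \<in> X\<close> \<open>\<And>j. hi j \<in> X\<close> z by (intro lattice_rhs_le[OF assms(2,3) lip]) auto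
    then show False using 1 pos super[of i] by simp
  next
    case 2
    then obtain z' where "z' \<in> S" "z i < z' i"
      using lattice_subsolution_raise[where lo = lo and hi = hi, OF assms(2,3) lip X] \<open>z \<in> S\<close> pos
      unfolding S_def by blast
    then show False using maximal by (simp add: not_le[symmetric])
  qed
qed

lemma lattice_solution_between:
  assumes "0 \<le> d" "0 \<le> k" and lip: "L-lipschitz_on X f" and X: "\<And>i. {lo i..hi i} \<subseteq> X"
    and "\<And>i. lo i \<le> hi i"
    and sub: "\<And>i. 0 \<le> lattice_rhs d k f lo i" and super: "\<And>i. lattice_rhs d k f hi i \<le> 0"
  shows "\<exists>x. \<forall>i. lo i \<le> x i \<and> x i \<le> hi i \<and> lattice_rhs d k f x i = 0"
proof -
  let ?S = "lattice_subsolutions d k f lo hi"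
  have "lo \<in> ?S" using assms(5) sub unfolding lattice_subsolutions_def by auto
  then have "?S \<noteq> {}" by blast
  define z where "z = (\<lambda>i. SUP x\<in>?S. x i)"
  have "z \<in> ?S" and "\<And>x i. x \<in> ?S \<Longrightarrow> x i \<le> z i"
    using Sup_lattice_subsolutions[OF assms(1,2) lip X \<open>?S \<noteq> {}\<close>] unfolding z_def by auto
  then have "lattice_rhs d k f z i = 0" for i
    by (rule maximal_lattice_subsolution_solves[OF assms(1,2) lip X _ _ super])
  with \<open>z \<in> ?S\<close> show ?thesis unfolding lattice_subsolutions_def by blast
qed

lemma gcub_lipschitz:
  assumes "0 \<le> a" "a \<le> 1"
  shows "4-lipschitz_on {0..1} (\<lambda>u. gcub u a)"
proof (rule lipschitz_onI)
  fix u v :: real assume "u \<in> {0..1}" "v \<in> {0..1}"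
  define Q where "Q = (1 + a) * (u + v) - (u * u + u * v + v * v) - a"
  have "gcub u a - gcub v a = (u - v) * Q" unfolding gcub_def Q_def by (simp add: algebra_simps)
  moreover have "\<bar>Q\<bar> \<le> 4"
  proof -
    have "0 \<le> u * u + u * v + v * v" "u * u \<le> 1" "u * v \<le> 1" "v * v \<le> 1"
      using \<open>u \<in> {0..1}\<close> \<open>v \<in> {0..1}\<close> by (auto intro: mult_le_one)
    moreover have "0 \<le> (1 + a) * (u + v)" "(1 + a) * (u + v) \<le> 2 * 2"
      using assms \<open>u \<in> {0..1}\<close> \<open>v \<in> {0..1}\<close> by (simp, intro mult_mono) auto
    ultimately show ?thesis unfolding Q_def using assms by linarith
  qed
  ultimately show "dist (gcub u a) (gcub v a) \<le> 4 * dist u v"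
    using mult_right_mono[of "\<bar>Q\<bar>" 4 "\<bar>u - v\<bar>"] unfolding dist_real_def by (simp add: abs_mult mult_ac)
qed simp

lemma lattice_rhs_bounds:
  assumes "0 \<le> d" "0 \<le> k" and "\<And>j. 0 \<le> x j" "\<And>j. x j \<le> 1"
  shows "f (x i) - d * (k + 1) * x i \<le> lattice_rhs d k f x i"
    and "lattice_rhs d k f x i \<le> f (x i) + d * (k + 1) * (1 - x i)"
proof -
  have "0 \<le> k * x (i + 1) + x (i - 1)" "k * x (i + 1) + x (i - 1) \<le> k + 1"
    using assms(2) assms(3,4)[of "i + 1"] assms(3,4)[of "i - 1"] by (auto intro!: add_mono mult_left_le)
  then have "0 \<le> d * (k * x (i + 1) + x (i - 1))" "d * (k * x (i + 1) + x (i - 1)) \<le> d * (k + 1)"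
    using assms(1) by (simp_all add: mult_left_mono)
  then show "f (x i) - d * (k + 1) * x i \<le> lattice_rhs d k f x i"
    and "lattice_rhs d k f x i \<le> f (x i) + d * (k + 1) * (1 - x i)"
    unfolding lattice_rhs_def by (simp_all add: algebra_simps)
qed

lemma less_d_minus_witness:
  assumes "0 < a" "a < 1" and "t < d_minus a"
  shows "\<exists>b. a < b \<and> b < 1 \<and> t * b < gcub b a"
proof -
  have bdd: "bdd_above ((\<lambda>y. gcub y a / y) ` {a<..<1})"
  proof (rule bdd_aboveI2)
    fix y :: real assume "y \<in> {a<..<1}"
    then have "gcub y a / y = (1 - y) * (y - a)" using assms(1) unfolding gcub_def by auto
    also have "\<dots> \<le> 1 * 1" using \<open>y \<in> {a<..<1}\<close> assms by (intro mult_mono) auto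
    finally show "gcub y a / y \<le> 1" by simp
  qed
  then obtain b where "a < b" "b < 1" "t < gcub b a / b"
    using assms(3) less_cSUP_iff[OF _ bdd] assms(2) unfolding d_minus_def by auto
  moreover have "0 < b" using \<open>a < b\<close> assms(1) by simp
  ultimately show ?thesis by (auto simp: pos_less_divide_eq)
qed

lemma less_d_plus_witness:
  assumes "0 < a" "a < 1" "0 < k" and "t < k * d_plus a k"
  shows "\<exists>b. 0 < b \<and> b < a \<and> t * (1 - b) < - gcub b a"
proof -
  have bdd: "bdd_above ((\<lambda>y. - gcub (1 - y) a / (k * y)) ` {1 - a<..<1})"
  proof (rule bdd_aboveI2)
    fix y :: real assume "y \<in> {1 - a<..<1}"
    then have "- gcub (1 - y) a / (k * y) = (1 - y) * (a - (1 - y)) / k"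
      using assms unfolding gcub_def by (auto simp: field_simps)
    also have "\<dots> \<le> 1 * 1 / k"
      using \<open>y \<in> {1 - a<..<1}\<close> assms by (intro divide_right_mono mult_mono) auto
    finally show "- gcub (1 - y) a / (k * y) \<le> 1 / k" by simp
  qed
  have "t / k < d_plus a k" using assms(3,4) by (simp add: field_simps)
  then obtain y where "1 - a < y" "y < 1" "t / k < - gcub (1 - y) a / (k * y)"
    using less_cSUP_iff[OF _ bdd] assms(1) unfolding d_plus_def by auto
  moreover have "0 < y" using \<open>1 - a < y\<close> assms(2) by simp
  ultimately have "t * y < - gcub (1 - y) a" using assms(3) by (simp add: field_simps)
  then show ?thesis using \<open>1 - a < y\<close> \<open>y < 1\<close> by (intro exI[of _ "1 - y"]) simp
qed

lemma d_zero_thresholds: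
  assumes "0 < k" "0 < a" "a < 1" "d < d_zero a k"
  shows "\<exists>b\<^sub>0 b\<^sub>1. 0 < b\<^sub>0 \<and> b\<^sub>0 < a \<and> d * (k + 1) * (1 - b\<^sub>0) < - gcub b\<^sub>0 a \<and>
                 a < b\<^sub>1 \<and> b\<^sub>1 < 1 \<and> d * (k + 1) * b\<^sub>1 < gcub b\<^sub>1 a"
proof -
  have "d * (k + 1) < k * d_plus a k" "d * (k + 1) < d_minus a"
    using assms(1,4) unfolding d_zero_def by (simp_all add: field_simps)
  then show ?thesis
    using less_d_plus_witness[OF assms(2,3,1)] less_d_minus_witness[OF assms(2,3)] by blast
qed

lemma lattice_pattern_solution:
  assumes "0 < k" "0 < a" "a < 1" "0 < d" "d < d_zero a k"
  shows "\<exists>x. \<forall>i. lattice_rhs d k (\<lambda>u. gcub u a) x i = 0 \<and>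
               x i \<in> (if i \<in> S then {a<..1} else {0..<a})"
proof -
  obtain b\<^sub>0 b\<^sub>1 where b\<^sub>0: "0 < b\<^sub>0" "b\<^sub>0 < a" "d * (k + 1) * (1 - b\<^sub>0) < - gcub b\<^sub>0 a"
    and b\<^sub>1: "a < b\<^sub>1" "b\<^sub>1 < 1" "d * (k + 1) * b\<^sub>1 < gcub b\<^sub>1 a"
    using d_zero_thresholds[OF assms(1-3,5)] by blast
  define lo where "lo i = (if i \<in> S then b\<^sub>1 else 0)" for i
  define hi where "hi i = (if i \<in> S then 1 else b\<^sub>0)" for i
  have lo: "0 \<le> lo i" "lo i \<le> 1" and hi: "0 \<le> hi i" "hi i \<le> 1" for i
    unfolding lo_def hi_def using b\<^sub>0 b\<^sub>1 assms(2) by auto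
  have "0 \<le> d" "0 \<le> k" using assms(1,4) by simp_all
  have "0 \<le> lattice_rhs d k (\<lambda>u. gcub u a) lo i" for i
  proof -
    have "gcub (lo i) a - d * (k + 1) * lo i \<le> lattice_rhs d k (\<lambda>u. gcub u a) lo i"
      by (rule lattice_rhs_bounds(1)) (use \<open>0 \<le> d\<close> \<open>0 \<le> k\<close> lo in auto)
    moreover have "0 \<le> gcub (lo i) a - d * (k + 1) * lo i"
      using b\<^sub>1(3) unfolding lo_def by (simp add: gcub_def)
    ultimately show ?thesis by linarith
  qed
  moreover have "lattice_rhs d k (\<lambda>u. gcub u a) hi i \<le> 0" for i
  proof -
    have "lattice_rhs d k (\<lambda>u. gcub u a) hi i \<le> gcub (hi i) a + d * (k + 1) * (1 - hi i)"
      by (rule lattice_rhs_bounds(2)) (use \<open>0 \<le> d\<close> \<open>0 \<le> k\<close> hi in auto)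
    moreover have "gcub (hi i) a + d * (k + 1) * (1 - hi i) \<le> 0"
      using b\<^sub>0(3) unfolding hi_def by (simp add: gcub_def)
    ultimately show ?thesis by linarith
  qed
  moreover have "{lo i..hi i} \<subseteq> {0..1}" for i using lo hi by auto
  moreover have "lo i \<le> hi i" for i unfolding lo_def hi_def using b\<^sub>0 b\<^sub>1 by simp
  ultimately obtain x where x: "\<forall>i. lo i \<le> x i \<and> x i \<le> hi i \<and> lattice_rhs d k (\<lambda>u. gcub u a) x i = 0"
    using lattice_solution_between[OF \<open>0 \<le> d\<close> \<open>0 \<le> k\<close> gcub_lipschitz] assms(2,3) by fastforce
  show ?thesis
  proof (intro exI allI)
    fix i
    have "lo i \<le> x i" "x i \<le> hi i" "lattice_rhs d k (\<lambda>u. gcub u a) x i = 0" using x by auto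
    then show "lattice_rhs d k (\<lambda>u. gcub u a) x i = 0 \<and> x i \<in> (if i \<in> S then {a<..1} else {0..<a})"
      using b\<^sub>0 b\<^sub>1 unfolding lo_def hi_def by (cases "i \<in> S") auto
  qed
qed

lemma lat_rhs_floor:
  "lat_rhs a d k (\<lambda>\<xi>. x \<lfloor>\<xi>\<rfloor>) \<xi> = lattice_rhs d k (\<lambda>u. gcub u a) x \<lfloor>\<xi>\<rfloor>"
  unfolding lat_rhs_def lattice_rhs_def by simp

lemma lat_pattern_solution:
  assumes "0 < k" "0 < a" "a < 1" "0 < d" "d < d_zero a k"
  shows "\<exists>\<Phi>. (\<forall>\<xi>. lat_rhs a d k \<Phi> \<xi> = 0) \<and> range \<Phi> \<subseteq> {0..1} \<and>
             (\<forall>i. \<Phi> (of_int i) \<in> (if i \<in> S then {a<..1} else {0..<a}))"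
proof -
  obtain x where x: "\<And>i. lattice_rhs d k (\<lambda>u. gcub u a) x i = 0"
      "\<And>i. x i \<in> (if i \<in> S then {a<..1} else {0..<a})"
    using lattice_pattern_solution[OF assms] by blast
  have "x i \<in> {0..1}" for i using x(2)[of i] assms(2,3) by (auto split: if_splits)
  then show ?thesis using x by (intro exI[of _ "\<lambda>\<xi>. x \<lfloor>\<xi>\<rfloor>"]) (auto simp: lat_rhs_floor)
qed

lemma infinitely_many_bounded_lat_solutions:
  assumes "0 < k" "0 < a" "a < 1" "0 < d" "d < d_zero a k"
  shows "infinite {\<Phi> :: real \<Rightarrow> real. bounded (range \<Phi>) \<and> (\<forall>\<xi>. lat_rhs a d k \<Phi> \<xi> = 0)}"
proof -
  have "\<exists>\<Phi>. (\<forall>\<xi>. lat_rhs a d k \<Phi> \<xi> = 0) \<and> range \<Phi> \<subseteq> {0..1} \<and>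
      (\<forall>i. \<Phi> (of_int i) \<in> (if i \<in> {int n} then {a<..1} else {0..<a}))" for n
    by (rule lat_pattern_solution[OF assms])
  then obtain \<Psi> where \<Psi>: "\<And>n. (\<forall>\<xi>. lat_rhs a d k (\<Psi> n) \<xi> = 0) \<and> range (\<Psi> n) \<subseteq> {0..1} \<and>
      (\<forall>i. \<Psi> n (of_int i) \<in> (if i \<in> {int n} then {a<..1} else {0..<a}))"
    by metis
  have pattern: "\<Psi> n (of_int i) \<in> (if i = int n then {a<..1} else {0..<a})" for n i
    using \<Psi>[of n] by simp
  have "inj \<Psi>"
  proof (rule injI)
    fix m n assume "\<Psi> m = \<Psi> n"
    have "\<Psi> m (of_int (int m)) \<in> {a<..1}" using pattern[of m "int m"] by simp
    moreover have "m \<noteq> n \<Longrightarrow> \<Psi> n (of_int (int m)) \<in> {0..<a}" using pattern[of n "int m"] by simp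
    ultimately show "m = n" using \<open>\<Psi> m = \<Psi> n\<close> by fastforce
  qed
  moreover have "bounded (range (\<Psi> n))" for n
    using \<Psi>[of n] bounded_subset[OF bounded_closed_interval] by blast
  then have "range \<Psi> \<subseteq> {\<Phi>. bounded (range \<Phi>) \<and> (\<forall>\<xi>. lat_rhs a d k \<Phi> \<xi> = 0)}"
    using \<Psi> by blast
  ultimately show ?thesis using range_inj_infinite infinite_super by blast
qed

theorem proposition2p8:
  fixes a k :: real
  assumes "k > 0" and "0 < a" and "a < 1"
  shows
    "(\<forall>d c \<Phi>. 0 < d \<and> d < min (a^2 / (4 * k)) ((1 - a)^2 / 4) \<and> tw_solution a d k c \<Phi>
         \<longrightarrow> c = 0)
   \<and> (\<forall>d. 0 < d \<and> d < d_zero a k \<longrightarrow>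
         (\<forall>s :: int \<Rightarrow> nat. (\<forall>i. s i \<in> {0, 1}) \<longrightarrow>
            (\<exists>\<Phi> :: real \<Rightarrow> real. (\<forall>\<xi>. lat_rhs a d k \<Phi> \<xi> = 0) \<and>
               (\<forall>i. (s i = 0 \<longrightarrow> \<Phi> (of_int i) \<in> {0..<a}) \<and>
                    (s i = 1 \<longrightarrow> \<Phi> (of_int i) \<in> {a<..1}))))
         \<and> infinite {\<Phi> :: real \<Rightarrow> real. bounded (range \<Phi>) \<and> (\<forall>\<xi>. lat_rhs a d k \<Phi> \<xi> = 0)})
   \<and> (\<forall>d c \<Phi>. k > 1 \<and> d > a^2 / (4 * (sqrt k - 1)^2) \<and> tw_solution a d k c \<Phi>
         \<longrightarrow> c < 0)"
proof (intro conjI allI impI)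
  show "c = 0" if "0 < d \<and> d < min (a^2 / (4 * k)) ((1 - a)^2 / 4) \<and> tw_solution a d k c \<Phi>"
    for d c \<Phi>
    using tw_speed_zero_if_small_d[OF assms] that by blast
  show "\<exists>\<Phi>. (\<forall>\<xi>. lat_rhs a d k \<Phi> \<xi> = 0) \<and>
          (\<forall>i. (s i = 0 \<longrightarrow> \<Phi> (of_int i) \<in> {0..<a}) \<and> (s i = 1 \<longrightarrow> \<Phi> (of_int i) \<in> {a<..1}))"
    if small: "0 < d \<and> d < d_zero a k" for d and s :: "int \<Rightarrow> nat"
  proof -
    obtain \<Phi> where "\<forall>\<xi>. lat_rhs a d k \<Phi> \<xi> = 0"
      and pattern: "\<And>i. \<Phi> (of_int i) \<in> (if i \<in> {i. s i = 1} then {a<..1} else {0..<a})"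
      using lat_pattern_solution[OF assms, of d "{i. s i = 1}"] small by blast
    moreover have "(s i = 0 \<longrightarrow> \<Phi> (of_int i) \<in> {0..<a}) \<and> (s i = 1 \<longrightarrow> \<Phi> (of_int i) \<in> {a<..1})" for i
      using pattern[of i] by auto
    ultimately show ?thesis by blast
  qed
  show "infinite {\<Phi>. bounded (range \<Phi>) \<and> (\<forall>\<xi>. lat_rhs a d k \<Phi> \<xi> = 0)}"
    if "0 < d \<and> d < d_zero a k" for d
    using infinitely_many_bounded_lat_solutions[OF assms] that by blast
  show "c < 0" if "k > 1 \<and> d > a^2 / (4 * (sqrt k - 1)^2) \<and> tw_solution a d k c \<Phi>" for d c \<Phi>
    using tw_speed_neg_if_large_d[OF _ assms(2,3)] that by blast
qed

end
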